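(* Let $q=2$ and $z>4$. Consider the mean-field equation in $u\in[0,1)$, $$u=\frac{1-\exp(\Delta_{\beta,2,z}(u))}{1+\exp(\Delta_{\beta,2,z}(u))},\qquad\Delta_{\beta,2,z}(u):=-\frac{\beta}{2^{z-1}}\Big[(1+u)^{z-1}-(1-u)^{z-1}\Big].$$ There exist $0<\beta_0(2,z)<\beta_1(2,z)$ such that: for $0<\beta<\beta_0$ the mean-field equation has only the trivial solution $u=0$; for $\beta_0<\beta<\beta_1$ it has exactly two additional solutions $0<u_1<u_2<1$; for $\beta=\beta_0$ or $\beta\geq\beta_1$ it has exactly one additional solution $0<u_2<1$. *)

theory Defs
  imports Complex_Main
begin

definition Delta2 :: "real \<Rightarrow> nat \<Rightarrow> real \<Rightarrow> real" where
  "Delta2 \<beta> z u = - (\<beta> / 2 ^ (z - 1)) * ((1 + u) ^ (z - 1) - (1 - u) ^ (z - 1))"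

definition mf_solutions :: "real \<Rightarrow> nat \<Rightarrow> real set" where
  "mf_solutions \<beta> z = {u. 0 \<le> u \<and> u < 1 \<and>
      u = (1 - exp (Delta2 \<beta> z u)) / (1 + exp (Delta2 \<beta> z u))}"

end

theory Submission
  imports Defs
begin

text \<open>Put \<open>m = z - 1\<close>. A nonzero \<open>u \<in> (0,1)\<close> solves the mean-field equation at \<open>\<beta>\<close> exactly
  when \<open>\<beta> = beta_of m u = 2^m ln((1+u)/(1-u)) / ((1+u)^m - (1-u)^m)\<close>. This function tends to
  \<open>\<beta>\<^sub>1 = 2^m/m\<close> as \<open>u \<rightarrow> 0\<close> and to \<open>\<infinity>\<close> as \<open>u \<rightarrow> 1\<close>. Its derivative is a positive multiple of
  \<open>beta_slope m\<close>, which vanishes at \<open>0\<close> and whose own derivative is a positive multiple of the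
  odd polynomial \<open>beta_slope_numer m\<close>. The coefficients of that polynomial change sign only
  once, so (as in Descartes' rule of signs) it is negative and then positive on \<open>(0,1)\<close>. Hence
  \<open>beta_slope m\<close> is negative and then positive, i.e. \<open>beta_of m\<close> decreases to its minimum
  \<open>\<beta>\<^sub>0\<close> and then increases to \<open>\<infinity>\<close>; counting the preimages of a level \<open>\<beta>\<close> under such a
  valley-shaped function gives the three regimes.\<close>

lemma one_sign_change_sum_pos:
  fixes c :: "nat \<Rightarrow> real"
  assumes neg: "\<And>j. j \<le> N \<Longrightarrow> c j \<le> 0"
    and nonneg: "\<And>j. N < j \<Longrightarrow> j \<le> n \<Longrightarrow> 0 \<le> c j"
    and k: "N < k" "k \<le> n" "0 < c k"
    and uv: "0 < u" "u < v"
    and nonneg_u: "0 \<le> (\<Sum>j\<le>n. c j * u ^ j)"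
  shows "0 < (\<Sum>j\<le>n. c j * v ^ j)"
proof -
  define t where "t = v / u"
  have t: "1 < t" and v: "v ^ j = t ^ j * u ^ j" for j
    using uv by (simp_all add: t_def power_divide)
  \<comment> \<open>Passing from \<open>u\<close> to \<open>v = t u\<close> multiplies the \<open>j\<close>-th term by \<open>t^j\<close>, which is at least
    \<open>t^N\<close> on the nonnegative terms and at most \<open>t^N\<close> on the nonpositive ones.\<close>
  have term_le: "t ^ N * (c j * u ^ j) \<le> c j * v ^ j" if "j \<le> n" for j
  proof -
    have "c j * t ^ N \<le> c j * t ^ j"
    proof (cases "j \<le> N")
      case True
      then show ?thesis using neg t by (intro mult_left_mono_neg power_increasing) auto
    next
      case False
      then show ?thesis using nonneg that t by (intro mult_left_mono power_increasing) auto
    qed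
    then have "(c j * t ^ N) * u ^ j \<le> (c j * t ^ j) * u ^ j" using uv by (simp add: mult_right_mono)
    then show ?thesis by (simp add: v mult_ac)
  qed
  have term_less: "t ^ N * (c k * u ^ k) < c k * v ^ k"
  proof -
    have "c k * t ^ N < c k * t ^ k" using k t by (simp add: power_strict_increasing)
    then have "(c k * t ^ N) * u ^ k < (c k * t ^ k) * u ^ k" using uv by (simp add: mult_strict_right_mono)
    then show ?thesis by (simp add: v mult_ac)
  qed
  have "0 \<le> t ^ N * (\<Sum>j\<le>n. c j * u ^ j)" using nonneg_u t by simp
  also have "\<dots> = (\<Sum>j\<le>n. t ^ N * (c j * u ^ j))" by (simp add: sum_distrib_left)
  also have "\<dots> < (\<Sum>j\<le>n. c j * v ^ j)"
    using term_le term_less k by (intro sum_strict_mono_ex1) (auto intro!: bexI[of _ k])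
  finally show ?thesis .
qed

lemma first_sign_change:
  fixes f :: "real \<Rightarrow> real"
  assumes neg_near: "\<forall>\<^sub>F u in at_right a. f u < 0"
    and persist: "\<And>u v. a < u \<Longrightarrow> u < v \<Longrightarrow> v < b \<Longrightarrow> 0 \<le> f u \<Longrightarrow> 0 < f v"
    and s: "a < s" "s < b" "0 < f s"
  shows "\<exists>d. a < d \<and> d < b \<and> (\<forall>u. a < u \<and> u < d \<longrightarrow> f u < 0) \<and> (\<forall>u. d < u \<and> u < b \<longrightarrow> 0 < f u)"
proof -
  define S where "S = {u. a < u \<and> u < b \<and> 0 \<le> f u}"
  obtain e where e: "a < e" and neg: "\<And>u. a < u \<Longrightarrow> u < e \<Longrightarrow> f u < 0"
    using neg_near by (auto simp: eventually_at_right_field)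
  have sS: "s \<in> S" using s by (simp add: S_def)
  have e_le: "e \<le> u" if "u \<in> S" for u
    using that neg[of u] by (force simp: S_def)
  have bdd: "bdd_below S" using e_le by (rule bdd_belowI)
  show ?thesis
  proof (intro exI conjI allI impI)
    have "e \<le> Inf S" using e_le sS by (intro cInf_greatest) auto
    then show "a < Inf S" using e by simp
    show "Inf S < b" using s cInf_lower[OF sS bdd] by simp
  next
    fix u assume "a < u \<and> u < Inf S"
    then show "f u < 0" using cInf_lower[OF _ bdd, of u] s cInf_lower[OF sS bdd]
      by (force simp: S_def)
  next
    fix u assume u: "Inf S < u \<and> u < b"
    then obtain s' where "s' \<in> S" "s' < u" using cInf_less_iff[OF _ bdd] sS by blast
    then show "0 < f u" using persist[of s' u] u by (simp add: S_def)
  qed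
qed

lemma deriv_sign_valley:
  fixes f f' :: "real \<Rightarrow> real"
  assumes "c < b"
    and cont: "continuous_on {a..<b} f"
    and deriv: "\<And>x. a < x \<Longrightarrow> x < b \<Longrightarrow> (f has_real_derivative f' x) (at x)"
    and neg: "\<And>x. a < x \<Longrightarrow> x < c \<Longrightarrow> f' x < 0"
    and pos: "\<And>x. c < x \<Longrightarrow> x < b \<Longrightarrow> 0 < f' x"
  shows "\<And>x y. a \<le> x \<Longrightarrow> x < y \<Longrightarrow> y \<le> c \<Longrightarrow> f y < f x"
    and "\<And>x y. a \<le> x \<Longrightarrow> c \<le> x \<Longrightarrow> x < y \<Longrightarrow> y < b \<Longrightarrow> f x < f y"
proof -
  fix x y assume xy: "a \<le> x" "x < y" "y \<le> c"
  show "f y < f x"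
  proof (rule DERIV_neg_imp_decreasing_open[OF \<open>x < y\<close>])
    show "continuous_on {x..y} f" using xy \<open>c < b\<close> by (auto intro: continuous_on_subset[OF cont])
  next
    fix w assume "x < w" "w < y"
    with xy \<open>c < b\<close> show "\<exists>D. (f has_real_derivative D) (at w) \<and> D < 0"
      by (intro exI[of _ "f' w"] conjI deriv neg) auto
  qed
next
  fix x y assume xy: "a \<le> x" "c \<le> x" "x < y" "y < b"
  show "f x < f y"
  proof (rule DERIV_pos_imp_increasing_open[OF \<open>x < y\<close>])
    show "continuous_on {x..y} f" using xy by (auto intro: continuous_on_subset[OF cont])
  next
    fix w assume "x < w" "w < y"
    with xy show "\<exists>D. (f has_real_derivative D) (at w) \<and> 0 < D"
      by (intro exI[of _ "f' w"] conjI deriv pos) auto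
  qed
qed

context
  fixes f :: "real \<Rightarrow> real" and a b c L :: real
  assumes ac: "a < c" and cb: "c < b"
    and cont: "\<And>x. a < x \<Longrightarrow> x < b \<Longrightarrow> isCont f x"
    and dec: "\<And>x y. a < x \<Longrightarrow> x < y \<Longrightarrow> y \<le> c \<Longrightarrow> f y < f x"
    and inc: "\<And>x y. c \<le> x \<Longrightarrow> x < y \<Longrightarrow> y < b \<Longrightarrow> f x < f y"
    and lim_left: "(f \<longlongrightarrow> L) (at_right a)"
    and lim_right: "filterlim f at_top (at_left b)"
begin

lemma valley_continuous_on: "a < x \<Longrightarrow> y < b \<Longrightarrow> continuous_on {x..y} f"
  by (intro continuous_at_imp_continuous_on ballI cont) auto

lemma valley_min: "a < u \<Longrightarrow> u < b \<Longrightarrow> u \<noteq> c \<Longrightarrow> f c < f u"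
  using dec[of u c] inc[of c u] by (cases "u < c") auto

lemma valley_below_limit:
  assumes "a < u" "u \<le> c"
  shows "f u < L"
proof -
  define v where "v = (a + u) / 2"
  have v: "a < v" "v < u" using assms by (simp_all add: v_def)
  have "f v \<le> L"
  proof (rule tendsto_lowerbound[OF lim_left])
    show "\<forall>\<^sub>F w in at_right a. f v \<le> f w"
      unfolding eventually_at_right_field
      using v assms by (intro exI[of _ v]) (auto intro!: less_imp_le dec)
  qed simp
  moreover have "f u < f v" using v assms by (intro dec)
  ultimately show ?thesis by simp
qed

lemma valley_left_unique:
  "a < x \<Longrightarrow> x \<le> c \<Longrightarrow> a < y \<Longrightarrow> y \<le> c \<Longrightarrow> f x = f y \<Longrightarrow> x = y"
  using dec[of x y] dec[of y x] by (cases x y rule: linorder_cases) auto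

lemma valley_right_unique:
  "c \<le> x \<Longrightarrow> x < b \<Longrightarrow> c \<le> y \<Longrightarrow> y < b \<Longrightarrow> f x = f y \<Longrightarrow> x = y"
  using inc[of x y] inc[of y x] by (cases x y rule: linorder_cases) auto

lemma valley_left_root:
  assumes "f c < \<beta>" "\<beta> < L"
  shows "\<exists>u. a < u \<and> u < c \<and> f u = \<beta>"
proof -
  obtain e where e: "a < e" "e < c" "\<beta> < f e"
  proof -
    obtain d where d: "a < d" "\<And>w. a < w \<Longrightarrow> w < d \<Longrightarrow> \<beta> < f w"
      using order_tendstoD(1)[OF lim_left \<open>\<beta> < L\<close>] by (auto simp: eventually_at_right_field)
    show thesis using d ac by (intro that[of "(a + min d c) / 2"]) auto
  qed
  then obtain u where "e \<le> u" "u \<le> c" "f u = \<beta>"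
    using IVT2'[of f c \<beta> e] assms valley_continuous_on[of e c] cb by auto
  then show ?thesis using e assms by (intro exI[of _ u]) (auto simp: order.order_iff_strict)
qed

lemma valley_right_root:
  assumes "f c < \<beta>"
  shows "\<exists>u. c < u \<and> u < b \<and> f u = \<beta>"
proof -
  obtain w where w: "c < w" "w < b" "\<beta> < f w"
  proof -
    obtain d where d: "d < b" "\<And>w. d < w \<Longrightarrow> w < b \<Longrightarrow> \<beta> < f w"
      using filterlim_at_top_dense[THEN iffD1, OF lim_right, rule_format, of \<beta>]
      by (auto simp: eventually_at_left_field)
    show thesis using d cb by (intro that[of "(max d c + b) / 2"]) auto
  qed
  then obtain u where "c \<le> u" "u \<le> w" "f u = \<beta>"
    using IVT'[of f c \<beta> w] assms valley_continuous_on[of c w] ac by auto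
  then show ?thesis using w assms by (intro exI[of _ u]) (auto simp: order.order_iff_strict)
qed

lemma valley_level_set_empty: "\<beta> < f c \<Longrightarrow> {u. a < u \<and> u < b \<and> f u = \<beta>} = {}"
  using valley_min by force

lemma valley_level_set_two:
  assumes "f c < \<beta>" "\<beta> < L"
  shows "\<exists>u1 u2. a < u1 \<and> u1 < c \<and> c < u2 \<and> u2 < b \<and>
           {u. a < u \<and> u < b \<and> f u = \<beta>} = {u1, u2}"
proof -
  obtain u1 where u1: "a < u1" "u1 < c" "f u1 = \<beta>" using valley_left_root assms by blast
  obtain u2 where u2: "c < u2" "u2 < b" "f u2 = \<beta>" using valley_right_root assms by blast
  have "u = u1 \<or> u = u2" if "a < u" "u < b" "f u = \<beta>" for u
    using that u1 u2 valley_left_unique[of u u1] valley_right_unique[of u u2] by fastforce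
  then show ?thesis using u1 u2 ac cb by (intro exI conjI) auto
qed

lemma valley_level_set_one:
  assumes "\<beta> = f c \<or> L \<le> \<beta>"
  shows "\<exists>u. c \<le> u \<and> u < b \<and> {u. a < u \<and> u < b \<and> f u = \<beta>} = {u}"
proof (cases "\<beta> = f c")
  case True
  then show ?thesis using valley_min ac cb by (intro exI[of _ c]) force
next
  case False
  with assms have "L \<le> \<beta>" by simp
  moreover have "f c < L" using valley_below_limit ac by simp
  ultimately obtain u2 where u2: "c < u2" "u2 < b" "f u2 = \<beta>"
    using valley_right_root[of \<beta>] by auto
  have "u = u2" if "a < u" "u < b" "f u = \<beta>" for u
  proof -
    have "c < u" using that \<open>L \<le> \<beta>\<close> valley_below_limit[of u] by force
    then show ?thesis using that u2 valley_right_unique[of u u2] by simp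
  qed
  then show ?thesis using u2 ac by (intro exI[of _ u2]) auto
qed

end

lemma sum_index_binomial_power:
  fixes x :: real
  shows "(\<Sum>j\<le>Suc n. real j * real (Suc n choose j) * x ^ j) = real (Suc n) * x * (1 + x) ^ n"
proof -
  have "(\<Sum>j\<le>Suc n. real j * real (Suc n choose j) * x ^ j)
      = (\<Sum>j\<le>n. real (Suc j) * real (Suc n choose Suc j) * x ^ Suc j)"
    by (subst sum.atMost_Suc_shift) simp
  also have "\<dots> = (\<Sum>j\<le>n. real (Suc n) * x * (real (n choose j) * x ^ j * 1 ^ (n - j)))"
  proof (rule sum.cong[OF refl])
    fix j
    have "real (Suc j) * real (Suc n choose Suc j) = real (Suc n) * real (n choose j)"
      by (metis Suc_times_binomial of_nat_mult)
    then show "real (Suc j) * real (Suc n choose Suc j) * x ^ Suc j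
             = real (Suc n) * x * (real (n choose j) * x ^ j * 1 ^ (n - j))"
      by (simp add: algebra_simps)
  qed
  also have "\<dots> = real (Suc n) * x * (x + 1) ^ n"
    by (simp add: binomial_ring sum_distrib_left)
  finally show ?thesis by (simp add: add.commute)
qed

lemma sum_binomial_centred_index:
  fixes x :: real
  shows "(\<Sum>j\<le>Suc n. real (Suc n choose j) * (2 * real j + 1 - real (Suc n)) * x ^ j)
       = (1 + x) ^ n * ((real (Suc n) + 1) * x - real n)"
proof -
  have "(\<Sum>j\<le>Suc n. real (Suc n choose j) * (2 * real j + 1 - real (Suc n)) * x ^ j)
     = 2 * (\<Sum>j\<le>Suc n. real j * real (Suc n choose j) * x ^ j)
       - real n * (\<Sum>j\<le>Suc n. real (Suc n choose j) * x ^ j * 1 ^ (Suc n - j))"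
    by (simp add: sum_distrib_left sum_subtractf[symmetric] algebra_simps)
  also have "\<dots> = 2 * (real (Suc n) * x * (1 + x) ^ n) - real n * (x + 1) ^ Suc n"
    by (simp only: sum_index_binomial_power binomial_ring)
  finally show ?thesis by (simp add: algebra_simps)
qed

definition lgap :: "real \<Rightarrow> real" where
  "lgap u = ln (1 + u) - ln (1 - u)"

definition pgap :: "nat \<Rightarrow> real \<Rightarrow> real" where
  "pgap m u = (1 + u) ^ m - (1 - u) ^ m"

definition beta_of :: "nat \<Rightarrow> real \<Rightarrow> real" where
  "beta_of m u = 2 ^ m * lgap u / pgap m u"

text \<open>\<open>pgap_deriv_scaled m u = (1 - u\<^sup>2) * pgap' m u\<close>; since \<open>lgap' u = 2 / (1 - u\<^sup>2)\<close>, the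
  function \<open>beta_slope m\<close> below is \<open>lgap' * pgap m / pgap' m - lgap\<close>.\<close>
definition pgap_deriv_scaled :: "nat \<Rightarrow> real \<Rightarrow> real" where
  "pgap_deriv_scaled m u = real m * ((1 + u) ^ m * (1 - u) + (1 + u) * (1 - u) ^ m)"

definition beta_slope :: "nat \<Rightarrow> real \<Rightarrow> real" where
  "beta_slope m u = 2 * pgap m u / pgap_deriv_scaled m u - lgap u"

definition beta_slope_numer :: "nat \<Rightarrow> real \<Rightarrow> real" where
  "beta_slope_numer m u = (1 + u) ^ (m - 1) * ((1 + u) - real m * (1 - u))
                        + (1 - u) ^ (m - 1) * (real m * (1 + u) - (1 - u))"

definition beta_slope_numer_coeff :: "nat \<Rightarrow> nat \<Rightarrow> real" where
  "beta_slope_numer_coeff m j = real (m choose j) * (2 * real j + 1 - real m) * (1 - (-1) ^ j)"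

lemma beta_slope_numer_expansion:
  assumes "1 \<le> m"
  shows "beta_slope_numer m u = (\<Sum>j\<le>m. beta_slope_numer_coeff m j * u ^ j)"
proof -
  obtain n where m: "m = Suc n" using assms by (cases m) auto
  have "(\<Sum>j\<le>m. beta_slope_numer_coeff m j * u ^ j)
      = (\<Sum>j\<le>Suc n. real (Suc n choose j) * (2 * real j + 1 - real (Suc n)) * u ^ j)
      - (\<Sum>j\<le>Suc n. real (Suc n choose j) * (2 * real j + 1 - real (Suc n)) * (-u) ^ j)"
    unfolding sum_subtractf[symmetric] m beta_slope_numer_coeff_def power_minus[of u]
    by (simp add: algebra_simps)
  also have "\<dots> = beta_slope_numer m u"
    unfolding sum_binomial_centred_index beta_slope_numer_def m by (simp add: algebra_simps)
  finally show ?thesis by simp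
qed

lemma beta_slope_numer_pos_mono:
  assumes m: "1 \<le> m" and uv: "0 < u" "u < v" and nonneg: "0 \<le> beta_slope_numer m u"
  shows "0 < beta_slope_numer m v"
proof -
  define k where "k = (if odd m then m else m - 1)"
  have sign_factor: "0 \<le> 1 - (-1::real) ^ j" for j by (cases "even j") auto
  show ?thesis
    unfolding beta_slope_numer_expansion[OF m]
  proof (rule one_sign_change_sum_pos[where N = "(m - 1) div 2" and k = k])
    fix j assume "j \<le> (m - 1) div 2"
    then have "2 * real j + 1 - real m \<le> 0" using m by linarith
    then show "beta_slope_numer_coeff m j \<le> 0"
      using sign_factor[of j] unfolding beta_slope_numer_coeff_def
      by (intro mult_nonpos_nonneg mult_nonneg_nonpos) auto
  next
    fix j assume "(m - 1) div 2 < j"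
    then have "0 \<le> 2 * real j + 1 - real m" using m by linarith
    then show "0 \<le> beta_slope_numer_coeff m j"
      using sign_factor[of j] unfolding beta_slope_numer_coeff_def by simp
  next
    show "(m - 1) div 2 < k" "k \<le> m" using m by (auto simp: k_def)
    have "0 < 2 * real k + 1 - real m" "odd k" using m by (auto simp: k_def)
    then show "0 < beta_slope_numer_coeff m k"
      using \<open>k \<le> m\<close> unfolding beta_slope_numer_coeff_def by simp
  qed (use uv nonneg beta_slope_numer_expansion[OF m] in auto)
qed

lemma DERIV_beta_slope_numer_zero:
  assumes m: "1 \<le> m"
  shows "(beta_slope_numer m has_real_derivative 2 * real m * (3 - real m)) (at 0)"
proof -
  have "beta_slope_numer m = (\<lambda>u. (1 + u) ^ (m - 1) * ((1 + u) - real m * (1 - u))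
                      + (1 - u) ^ (m - 1) * (real m * (1 + u) - (1 - u)))"
    by (simp add: beta_slope_numer_def fun_eq_iff)
  then show ?thesis
    apply simp
    apply (rule derivative_eq_intros refl | simp)+
    using m by (simp add: algebra_simps of_nat_diff)
qed

lemma beta_slope_numer_sign_change:
  assumes m: "4 \<le> m"
  shows "\<exists>d. 0 < d \<and> d < 1 \<and> (\<forall>u. 0 < u \<and> u < d \<longrightarrow> beta_slope_numer m u < 0)
             \<and> (\<forall>u. d < u \<and> u < 1 \<longrightarrow> 0 < beta_slope_numer m u)"
proof (rule first_sign_change)
  have m1: "1 \<le> m" using m by simp
  note DERIV_beta_slope_numer_zero[OF m1]
  moreover have "2 * real m * (3 - real m) < 0" using m by (simp add: mult_pos_neg)
  ultimately obtain e where "0 < e" "\<And>h. 0 < h \<Longrightarrow> h < e \<Longrightarrow> beta_slope_numer m h < 0"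
    using DERIV_neg_dec_right by (fastforce simp: beta_slope_numer_def)
  then show "\<forall>\<^sub>F u in at_right 0. beta_slope_numer m u < 0"
    unfolding eventually_at_right_field by auto
next
  show "\<And>u v. 0 < u \<Longrightarrow> u < v \<Longrightarrow> v < 1 \<Longrightarrow> 0 \<le> beta_slope_numer m u \<Longrightarrow> 0 < beta_slope_numer m v"
    using beta_slope_numer_pos_mono[of m] m by simp
next
  define s where "s = (real m - 1) / (real m + 1)"
  show "0 < s" "s < 1" using m by (auto simp: s_def)
  have "(1 + s) - real m * (1 - s) = 0" using m by (simp add: s_def field_simps)
  moreover have "0 < real m * (1 + s) - (1 - s)"
  proof -
    have "1 * (1 + s) \<le> real m * (1 + s)" using m \<open>0 < s\<close> by (intro mult_right_mono) auto
    then show ?thesis using \<open>0 < s\<close> by (simp add: algebra_simps)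
  qed
  ultimately show "0 < beta_slope_numer m s" using \<open>s < 1\<close> by (simp add: beta_slope_numer_def)
qed

lemma lgap_pos: "0 < u \<Longrightarrow> u < 1 \<Longrightarrow> 0 < lgap u"
  unfolding lgap_def by simp

lemma pgap_pos: "1 \<le> m \<Longrightarrow> 0 < u \<Longrightarrow> u < 1 \<Longrightarrow> 0 < pgap m u"
  unfolding pgap_def by (simp add: power_strict_mono)

lemma pgap_le: "0 < u \<Longrightarrow> u < 1 \<Longrightarrow> pgap m u \<le> 2 ^ m"
  unfolding pgap_def by (smt (verit) power_mono zero_le_power)

lemma pgap_deriv_scaled_pos: "1 \<le> m \<Longrightarrow> -1 < u \<Longrightarrow> u < 1 \<Longrightarrow> 0 < pgap_deriv_scaled m u"
  unfolding pgap_deriv_scaled_def by (simp add: add_pos_pos)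

lemma DERIV_lgap: "-1 < u \<Longrightarrow> u < 1 \<Longrightarrow> (lgap has_real_derivative 1 / (1 + u) + 1 / (1 - u)) (at u)"
  unfolding lgap_def [abs_def] by (auto intro!: derivative_eq_intros)

lemma DERIV_pgap:
  "(pgap (Suc n) has_real_derivative real (Suc n) * ((1 + u) ^ n + (1 - u) ^ n)) (at u)"
  unfolding pgap_def [abs_def]
  by (auto intro!: derivative_eq_intros simp del: power_Suc) (simp add: algebra_simps)

lemma DERIV_pgap_deriv_scaled:
  "(pgap_deriv_scaled (Suc n) has_real_derivative real (Suc n) *
     (real (Suc n) * (1 + u) ^ n * (1 - u) - (1 + u) * (1 + u) ^ n
      + (1 - u) * (1 - u) ^ n - real (Suc n) * (1 + u) * (1 - u) ^ n)) (at u)"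
  unfolding pgap_deriv_scaled_def [abs_def]
  by (auto intro!: derivative_eq_intros simp del: power_Suc) (simp add: algebra_simps)

lemma beta_slope_deriv_identity:
  fixes a b A B m E :: real
  assumes a: "0 < a" and b: "0 < b" and ab: "a + b = 2"
    and E: "E = m * (a * A * b + a * b * B)" and E0: "E \<noteq> 0"
  shows "((2 * (m * A + m * B)) * E - (m * (m * A * b - a * A + b * B - m * a * B)) * (2 * (a * A - b * B)))
           / E ^ Suc (Suc 0) - (1 / a + 1 / b)
       = 2 * m * (a * A - b * B) * (A * (a - m * b) + B * (m * a - b)) / E ^ 2"
proof -
  have "1 / a + 1 / b = 2 / (a * b)" using a b ab by (simp add: field_simps)
  then have "((2 * (m * A + m * B)) * E - (m * (m * A * b - a * A + b * B - m * a * B)) * (2 * (a * A - b * B)))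
           / E ^ Suc (Suc 0) - (1 / a + 1 / b)
      = 2 * (((m * A + m * B) * E - (a * A - b * B) * (m * (m * A * b - a * A + b * B - m * a * B))) * a * b
             - E ^ 2) / (E ^ 2 * (a * b))"
    using a b E0 by (simp add: field_simps power2_eq_square)
  also have "\<dots> = 2 * (m * a * b * (a * A - b * B) * (A * (a - m * b) + B * (m * a - b))) / (E ^ 2 * (a * b))"
    unfolding E by algebra
  also have "\<dots> = 2 * m * (a * A - b * B) * (A * (a - m * b) + B * (m * a - b)) / E ^ 2"
    using a b E0 by (simp add: field_simps power2_eq_square)
  finally show ?thesis .
qed

lemma DERIV_beta_slope:
  assumes m: "1 \<le> m" and u: "-1 < u" "u < 1"
  shows "(beta_slope m has_real_derivative
            2 * real m * pgap m u * beta_slope_numer m u / (pgap_deriv_scaled m u) ^ 2) (at u)"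
proof -
  obtain n where n: "m = Suc n" using m by (cases m) auto
  have E0: "pgap_deriv_scaled m u \<noteq> 0" using pgap_deriv_scaled_pos[OF m u] by simp
  have "beta_slope m = (\<lambda>u. 2 * pgap m u / pgap_deriv_scaled m u - lgap u)"
    by (simp add: beta_slope_def fun_eq_iff)
  then have "(beta_slope m has_real_derivative
     ((2 * (real m * ((1 + u) ^ n + (1 - u) ^ n))) * pgap_deriv_scaled m u
      - (real m * (real m * (1 + u) ^ n * (1 - u) - (1 + u) * (1 + u) ^ n
          + (1 - u) * (1 - u) ^ n - real m * (1 + u) * (1 - u) ^ n)) * (2 * pgap m u))
       / (pgap_deriv_scaled m u) ^ Suc (Suc 0) - (1 / (1 + u) + 1 / (1 - u))) (at u)"
    (is "(_ has_real_derivative ?D) _")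
    unfolding n
    using DERIV_diff[OF DERIV_quotient[OF DERIV_cmult[OF DERIV_pgap] DERIV_pgap_deriv_scaled]
        DERIV_lgap[OF u]] E0 n by simp
  moreover have "?D = 2 * real m * pgap m u * beta_slope_numer m u / (pgap_deriv_scaled m u) ^ 2"
      using beta_slope_deriv_identity[of "1 + u" "1 - u" "pgap_deriv_scaled m u" "real m"
          "(1 + u) ^ n" "(1 - u) ^ n"] u E0
      by (simp add: n pgap_def pgap_deriv_scaled_def beta_slope_numer_def algebra_simps)
  ultimately show ?thesis by simp
qed

lemma pgap_ratio_lower_bound:
  assumes m: "1 \<le> m" and u: "0 < u" "u < 1"
  shows "u / (real m * (1 - u)) \<le> 2 * pgap m u / pgap_deriv_scaled m u"
proof -
  obtain n where n: "m = Suc n" using m by (cases m) auto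
  define a b where "a = 1 + u" and "b = 1 - u"
  have ab: "0 < b" "b < a" "1 \<le> a" "a \<le> 2" using u by (simp_all add: a_def b_def)
  have pow: "b ^ n \<le> a ^ n" using ab by (intro power_mono) auto
  have "2 * u * a ^ n \<le> pgap m u"
  proof -
    have "b * b ^ n \<le> b * a ^ n" using pow ab by (simp add: mult_left_mono)
    then show ?thesis unfolding pgap_def n a_def b_def by (simp add: algebra_simps)
  qed
  moreover have E: "pgap_deriv_scaled m u \<le> 2 * real m * a * a ^ n * b"
  proof -
    have "a * b * b ^ n \<le> a * b * a ^ n" using pow ab by (simp add: mult_left_mono)
    then have "real m * (a * a ^ n * b + a * b * b ^ n) \<le> real m * (2 * (a * a ^ n * b))"
      by (intro mult_left_mono) (simp_all add: algebra_simps)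
    then show ?thesis unfolding pgap_deriv_scaled_def n a_def b_def by (simp add: algebra_simps)
  qed
  moreover have "0 < pgap_deriv_scaled m u" using pgap_deriv_scaled_pos[OF m] u by simp
  moreover have "0 < a ^ n" using ab by simp
  ultimately have "2 * (2 * u * a ^ n) / (2 * real m * a * a ^ n * b) \<le> 2 * pgap m u / pgap_deriv_scaled m u"
    using ab u m pgap_pos[OF m u] by (intro frac_le) auto
  moreover have "u / (real m * b) \<le> 2 * (2 * u * a ^ n) / (2 * real m * a * a ^ n * b)"
    using ab u m by (simp add: field_simps)
  ultimately show ?thesis by (simp add: b_def)
qed

lemma beta_slope_pos_near_one:
  assumes m: "4 \<le> m"
  shows "0 < beta_slope m (1 - 1 / (64 * real m ^ 2))"
proof -
  define b where "b = 1 / (64 * real m ^ 2)"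
  have "1 \<le> real m ^ 2" using m by (simp add: one_le_power)
  then have b: "0 < b" "b \<le> 1 / 64" using m unfolding b_def by (auto simp: divide_simps)
  have "63 * real m \<le> (1 - b) / (real m * (1 - (1 - b)))"
    using b m by (simp add: b_def field_simps power2_eq_square)
  also have "\<dots> \<le> 2 * pgap m (1 - b) / pgap_deriv_scaled m (1 - b) "
    using b m by (intro pgap_ratio_lower_bound) auto
  finally have lower: "63 * real m \<le> 2 * pgap m (1 - b) / pgap_deriv_scaled m (1 - b)" .
  have "lgap (1 - b) = ln (2 - b) - ln b" by (simp add: lgap_def)
  moreover have "ln (2 - b) \<le> 1" using b ln_le_minus_one[of "2 - b"] by simp
  moreover have "ln b = - (ln 64 + 2 * ln (real m))"
    unfolding b_def using m by (simp add: ln_div ln_mult ln_realpow)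
  moreover have "ln 64 < (64::real)" by (rule ln_less_self) simp
  moreover have "ln (real m) < real m" using m by (intro ln_less_self) simp
  ultimately have "lgap (1 - b) < 65 + 2 * real m" by linarith
  with lower m show ?thesis unfolding beta_slope_def b_def by simp
qed

lemma beta_slope_valley:
  assumes m: "4 \<le> m"
  shows "\<exists>d. 0 < d \<and> d < 1 \<and> (\<forall>y. 0 < y \<and> y \<le> d \<longrightarrow> beta_slope m y < 0)
             \<and> (\<forall>x y. d \<le> x \<and> x < y \<and> y < 1 \<longrightarrow> beta_slope m x < beta_slope m y)"
proof -
  have m1: "1 \<le> m" using m by simp
  obtain d where d: "0 < d" "d < 1"
    and numer_neg: "\<And>u. 0 < u \<Longrightarrow> u < d \<Longrightarrow> beta_slope_numer m u < 0"
    and numer_pos: "\<And>u. d < u \<Longrightarrow> u < 1 \<Longrightarrow> 0 < beta_slope_numer m u"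
    using beta_slope_numer_sign_change[OF m] by blast
  define K where "K u = 2 * real m * pgap m u / (pgap_deriv_scaled m u) ^ 2" for u
  have K: "0 < K u" if "0 < u" "u < 1" for u
    unfolding K_def using pgap_pos[OF m1 that] pgap_deriv_scaled_pos[OF m1, of u] that m by simp
  have deriv: "(beta_slope m has_real_derivative K u * beta_slope_numer m u) (at u)"
    if "-1 < u" "u < 1" for u
    using DERIV_beta_slope[OF m1 that] by (simp add: K_def)
  have cont: "continuous_on {0..<1} (beta_slope m)"
    using deriv by (intro continuous_at_imp_continuous_on ballI DERIV_isCont) force
  have deriv_neg: "K u * beta_slope_numer m u < 0" if "0 < u" "u < d" for u
    using K[of u] numer_neg[OF that] that d by (intro mult_pos_neg) auto
  have deriv_pos: "0 < K u * beta_slope_numer m u" if "d < u" "u < 1" for u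
    using K[of u] numer_pos[OF that] that d by (intro mult_pos_pos) auto
  have deriv': "(beta_slope m has_real_derivative K u * beta_slope_numer m u) (at u)"
    if "0 < u" "u < 1" for u
    using deriv that by simp
  note valley = deriv_sign_valley[OF \<open>d < 1\<close> cont deriv' deriv_neg deriv_pos]
  have "beta_slope m 0 = 0" by (simp add: beta_slope_def pgap_def lgap_def)
  moreover have "beta_slope m y < beta_slope m 0" if "0 < y" "y \<le> d" for y
    using valley(1)[of 0 y] that by simp
  moreover have "beta_slope m x < beta_slope m y" if "d \<le> x" "x < y" "y < 1" for x y
    using valley(2)[of x y] that d by simp
  ultimately show ?thesis using d by (intro exI[of _ d]) auto
qed

lemma beta_slope_sign_change:
  assumes m: "4 \<le> m"
  shows "\<exists>c. 0 < c \<and> c < 1 \<and> (\<forall>u. 0 < u \<and> u < c \<longrightarrow> beta_slope m u < 0)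
             \<and> (\<forall>u. c < u \<and> u < 1 \<longrightarrow> 0 < beta_slope m u)"
proof -
  obtain d where d: "0 < d" "d < 1"
    and neg: "\<And>y. 0 < y \<Longrightarrow> y \<le> d \<Longrightarrow> beta_slope m y < 0"
    and inc: "\<And>x y. d \<le> x \<Longrightarrow> x < y \<Longrightarrow> y < 1 \<Longrightarrow> beta_slope m x < beta_slope m y"
    using beta_slope_valley[OF m] by blast
  define s where "s = 1 - 1 / (64 * real m ^ 2)"
  show ?thesis
  proof (rule first_sign_change[where s = s])
    show "\<forall>\<^sub>F u in at_right 0. beta_slope m u < 0"
      unfolding eventually_at_right_field using d neg by (intro exI[of _ d]) auto
  next
    fix u v :: real assume uv: "0 < u" "u < v" "v < 1" "0 \<le> beta_slope m u"
    then have "d \<le> u" using neg[of u] by force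
    then show "0 < beta_slope m v" using inc[of u v] uv by simp
  next
    have "1 \<le> real m ^ 2" using m by (simp add: one_le_power)
    then have "1 < 64 * real m ^ 2" by linarith
    then show "0 < s" "s < 1" using m by (auto simp: s_def divide_simps)
    show "0 < beta_slope m s" using beta_slope_pos_near_one[OF m] by (simp add: s_def)
  qed
qed

lemma DERIV_beta_of:
  assumes m: "1 \<le> m" and u: "0 < u" "u < 1"
  shows "(beta_of m has_real_derivative
            2 ^ m * pgap_deriv_scaled m u / ((1 - u\<^sup>2) * (pgap m u)\<^sup>2) * beta_slope m u) (at u)"
proof -
  obtain n where n: "m = Suc n" using m by (cases m) auto
  have P0: "pgap m u \<noteq> 0" using pgap_pos[OF m u] by simp
  have "beta_of m = (\<lambda>u. 2 ^ m * lgap u / pgap m u)" by (simp add: beta_of_def fun_eq_iff)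
  then have "(beta_of m has_real_derivative
     ((2 ^ m * (1 / (1 + u) + 1 / (1 - u))) * pgap m u
      - (real m * ((1 + u) ^ n + (1 - u) ^ n)) * (2 ^ m * lgap u)) / (pgap m u) ^ Suc (Suc 0)) (at u)"
    (is "(_ has_real_derivative ?D) _")
    using DERIV_quotient[OF DERIV_cmult[OF DERIV_lgap[of u]] DERIV_pgap[of n u], of "2 ^ m"] u P0 n
    by simp
  moreover have "?D = 2 ^ m * pgap_deriv_scaled m u / ((1 - u\<^sup>2) * (pgap m u)\<^sup>2) * beta_slope m u"
  proof -
    define K where "K = real m * ((1 + u) ^ n + (1 - u) ^ n)"
    define w where "w = (1 + u) * (1 - u)"
    have pos: "0 < K" "0 < w" using u by (simp_all add: K_def w_def n add_pos_pos)
    have E: "pgap_deriv_scaled m u = w * K"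
      by (simp add: K_def w_def n pgap_deriv_scaled_def algebra_simps)
    have w: "1 / (1 + u) + 1 / (1 - u) = 2 / w" "1 - u\<^sup>2 = w"
      using u by (simp_all add: w_def field_simps power2_eq_square)
    show ?thesis
      unfolding K_def[symmetric] beta_slope_def E w using pos P0 by (simp add: field_simps power2_eq_square)
  qed
  ultimately show ?thesis by simp
qed

lemma beta_of_tendsto_zero:
  assumes m: "1 \<le> m"
  shows "(beta_of m \<longlongrightarrow> 2 ^ m / real m) (at_right 0)"
proof -
  obtain n where n: "m = Suc n" using m by (cases m) auto
  have "((\<lambda>u. lgap u / u) \<longlongrightarrow> 2) (at_right 0)"
    using DERIV_lgap[of 0] unfolding has_field_derivative_iff
    by (simp add: lgap_def filterlim_at_split)
  moreover have "((\<lambda>u. pgap m u / u) \<longlongrightarrow> 2 * real m) (at_right 0)"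
    using DERIV_pgap[of n 0] unfolding has_field_derivative_iff n
    by (simp add: pgap_def filterlim_at_split algebra_simps)
  ultimately have "((\<lambda>u. 2 ^ m * (lgap u / u) / (pgap m u / u)) \<longlongrightarrow> 2 ^ m * 2 / (2 * real m)) (at_right 0)"
    using m by (intro tendsto_intros) auto
  moreover have "\<forall>\<^sub>F u in at_right 0. 2 ^ m * (lgap u / u) / (pgap m u / u) = beta_of m u"
    using eventually_at_right_less[of "0::real"] by eventually_elim (simp add: beta_of_def)
  ultimately show ?thesis by (simp add: tendsto_cong)
qed

lemma lgap_tendsto_one: "filterlim lgap at_top (at_left 1)"
proof -
  have "filterlim (\<lambda>u. 1 - u) (at_right 0) (at_left (1::real))"
    unfolding filterlim_at
    by (auto simp: eventually_at_left_field intro!: tendsto_eq_intros exI[of _ 0])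
  then have "filterlim (\<lambda>u. - ln (1 - u)) at_top (at_left (1::real))"
    unfolding filterlim_uminus_at_bot[symmetric] by (rule filterlim_compose[OF ln_at_0])
  moreover have "((\<lambda>u. ln (1 + u)) \<longlongrightarrow> ln 2) (at_left (1::real))"
    by (intro tendsto_eq_intros) auto
  moreover have "lgap = (\<lambda>u. ln (1 + u) + - ln (1 - u))" by (simp add: fun_eq_iff lgap_def)
  ultimately show ?thesis using filterlim_tendsto_add_at_top by metis
qed

lemma beta_of_tendsto_one:
  assumes m: "1 \<le> m"
  shows "filterlim (beta_of m) at_top (at_left 1)"
proof (rule filterlim_at_top_mono[OF lgap_tendsto_one])
  show "\<forall>\<^sub>F u in at_left 1. lgap u \<le> beta_of m u"
    unfolding eventually_at_left_field
  proof (intro exI[of _ 0] conjI allI impI)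
    fix u :: real assume u: "0 < u" "u < 1"
    then have "lgap u * pgap m u \<le> lgap u * 2 ^ m"
      using lgap_pos[of u] pgap_le[of u m] by (intro mult_left_mono) auto
    then show "lgap u \<le> beta_of m u"
      unfolding beta_of_def using pgap_pos[OF m] u by (simp add: field_simps)
  qed simp
qed

lemma mf_solutions_eq:
  assumes z: "2 \<le> z"
  shows "mf_solutions \<beta> z = insert 0 {u. 0 < u \<and> u < 1 \<and> beta_of (z - 1) u = \<beta>}"
proof -
  have "u \<in> mf_solutions \<beta> z \<longleftrightarrow> beta_of (z - 1) u = \<beta>" if u: "0 < u" "u < 1" for u
  proof -
    define D where "D = Delta2 \<beta> z u"
    have D: "D = - (\<beta> / 2 ^ (z - 1)) * pgap (z - 1) u" by (simp add: D_def Delta2_def pgap_def)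
    have P: "0 < pgap (z - 1) u" using pgap_pos z u by simp
    have "0 < 1 + exp D" by (simp add: add_pos_pos)
    then have "u = (1 - exp D) / (1 + exp D) \<longleftrightarrow> u * (1 + exp D) = 1 - exp D"
      by (simp add: eq_divide_eq)
    also have "\<dots> \<longleftrightarrow> exp D = (1 - u) / (1 + u)"
      using u by (auto simp: field_simps)
    also have "\<dots> \<longleftrightarrow> D = ln ((1 - u) / (1 + u))"
      using u by (metis divide_pos_pos exp_ln ln_exp add_pos_pos diff_gt_0_iff_gt zero_less_one)
    also have "ln ((1 - u) / (1 + u)) = - lgap u" using u by (simp add: lgap_def ln_div)
    also have "(D = - lgap u) \<longleftrightarrow> beta_of (z - 1) u = \<beta>"
      unfolding D beta_of_def using P by (auto simp: field_simps)
    finally show ?thesis using u by (simp add: mf_solutions_def D_def)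
  qed
  moreover have "u \<in> mf_solutions \<beta> z \<Longrightarrow> 0 \<le> u \<and> u < 1" for u
    by (simp add: mf_solutions_def)
  moreover have "0 \<in> mf_solutions \<beta> z" by (simp add: mf_solutions_def Delta2_def)
  ultimately show ?thesis by (auto simp: order.order_iff_strict)
qed

lemma beta_of_isCont: "1 \<le> m \<Longrightarrow> 0 < u \<Longrightarrow> u < 1 \<Longrightarrow> isCont (beta_of m) u"
  using DERIV_beta_of by (blast intro: DERIV_isCont)

lemma beta_of_valley:
  assumes m: "4 \<le> m"
  shows "\<exists>c. 0 < c \<and> c < 1
           \<and> (\<forall>x y. 0 < x \<and> x < y \<and> y \<le> c \<longrightarrow> beta_of m y < beta_of m x)
           \<and> (\<forall>x y. c \<le> x \<and> x < y \<and> y < 1 \<longrightarrow> beta_of m x < beta_of m y)"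
proof -
  have m1: "1 \<le> m" using m by simp
  obtain c where c: "0 < c" "c < 1"
    and slope_neg: "\<And>u. 0 < u \<Longrightarrow> u < c \<Longrightarrow> beta_slope m u < 0"
    and slope_pos: "\<And>u. c < u \<Longrightarrow> u < 1 \<Longrightarrow> 0 < beta_slope m u"
    using beta_slope_sign_change[OF m] by blast
  define K where "K u = 2 ^ m * pgap_deriv_scaled m u / ((1 - u\<^sup>2) * (pgap m u)\<^sup>2)" for u
  have K: "0 < K u" if "0 < u" "u < 1" for u
  proof -
    have "0 < 1 - u\<^sup>2" using that by (simp add: power_less_one_iff abs_square_less_1)
    then show ?thesis
      unfolding K_def using pgap_pos[OF m1 that] pgap_deriv_scaled_pos[OF m1, of u] that by simp
  qed
  have deriv: "(beta_of m has_real_derivative K u * beta_slope m u) (at u)" if "0 < u" "u < 1" for u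
    unfolding K_def using DERIV_beta_of[OF m1 that] .
  have deriv_neg: "K u * beta_slope m u < 0" if "0 < u" "u < c" for u
    using K[of u] slope_neg[OF that] that c by (intro mult_pos_neg) auto
  have deriv_pos: "0 < K u * beta_slope m u" if "c < u" "u < 1" for u
    using K[of u] slope_pos[OF that] that c by (intro mult_pos_pos) auto
  have cont: "continuous_on {a..<1} (beta_of m)" if "0 < a" for a
    using that by (intro continuous_at_imp_continuous_on ballI beta_of_isCont[OF m1]) auto
  note valley = deriv_sign_valley[OF \<open>c < 1\<close> cont, of _ "\<lambda>u. K u * beta_slope m u"]
  have dec: "beta_of m y < beta_of m x" if "0 < x" "x < y" "y \<le> c" for x y
    using valley(1)[of x x y] deriv deriv_neg deriv_pos that by auto
  have inc: "beta_of m x < beta_of m y" if "c \<le> x" "x < y" "y < 1" for x y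
    using valley(2)[of c x y] deriv deriv_neg deriv_pos that c by auto
  show ?thesis using c dec inc by blast
qed

theorem lemma5p5:
  fixes z :: nat
  assumes "z > 4"
  shows "\<exists>\<beta>0 \<beta>1::real. 0 < \<beta>0 \<and> \<beta>0 < \<beta>1 \<and>
    (\<forall>\<beta>. 0 < \<beta> \<and> \<beta> < \<beta>0 \<longrightarrow> mf_solutions \<beta> z = {0}) \<and>
    (\<forall>\<beta>. \<beta>0 < \<beta> \<and> \<beta> < \<beta>1 \<longrightarrow>
       (\<exists>u1 u2. 0 < u1 \<and> u1 < u2 \<and> u2 < 1 \<and> mf_solutions \<beta> z = {0, u1, u2})) \<and>
    (\<forall>\<beta>. \<beta> = \<beta>0 \<or> \<beta> \<ge> \<beta>1 \<longrightarrow>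
       (\<exists>u2. 0 < u2 \<and> u2 < 1 \<and> mf_solutions \<beta> z = {0, u2}))"
proof -
  define m where "m = z - 1"
  have m: "4 \<le> m" "1 \<le> m" using assms by (simp_all add: m_def)
  have solutions: "mf_solutions \<beta> z = insert 0 {u. 0 < u \<and> u < 1 \<and> beta_of m u = \<beta>}" for \<beta>
    using mf_solutions_eq assms by (simp add: m_def)
  obtain c where c: "0 < c" "c < 1"
    and dec: "\<And>x y. 0 < x \<Longrightarrow> x < y \<Longrightarrow> y \<le> c \<Longrightarrow> beta_of m y < beta_of m x"
    and inc: "\<And>x y. c \<le> x \<Longrightarrow> x < y \<Longrightarrow> y < 1 \<Longrightarrow> beta_of m x < beta_of m y"
    using beta_of_valley[OF m(1)] by blast
  note valley = c beta_of_isCont[OF m(2)] dec inc beta_of_tendsto_zero[OF m(2)] beta_of_tendsto_one[OF m(2)]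
  show ?thesis
  proof (rule exI[of _ "beta_of m c"], rule exI[of _ "2 ^ m / real m"], intro conjI allI impI)
    show "0 < beta_of m c" unfolding beta_of_def using lgap_pos pgap_pos m c by simp
    show "beta_of m c < 2 ^ m / real m" using valley_below_limit[OF valley] c by simp
  next
    fix \<beta> assume "0 < \<beta> \<and> \<beta> < beta_of m c"
    then have "{u. 0 < u \<and> u < 1 \<and> beta_of m u = \<beta>} = {}"
      using valley_level_set_empty[OF valley, of \<beta>] by simp
    then show "mf_solutions \<beta> z = {0}" by (simp only: solutions)
  next
    fix \<beta> assume "beta_of m c < \<beta> \<and> \<beta> < 2 ^ m / real m"
    then obtain u1 u2 where u: "0 < u1" "u1 < c" "c < u2" "u2 < 1"
      and level: "{u. 0 < u \<and> u < 1 \<and> beta_of m u = \<beta>} = {u1, u2}"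
      using valley_level_set_two[OF valley, of \<beta>] by auto
    have "mf_solutions \<beta> z = {0, u1, u2}" by (simp only: solutions level)
    then show "\<exists>u1 u2. 0 < u1 \<and> u1 < u2 \<and> u2 < 1 \<and> mf_solutions \<beta> z = {0, u1, u2}"
      using u by (intro exI[of _ u1] exI[of _ u2]) simp
  next
    fix \<beta> assume "\<beta> = beta_of m c \<or> 2 ^ m / real m \<le> \<beta>"
    then obtain u2 where u2: "c \<le> u2" "u2 < 1"
      and level: "{u. 0 < u \<and> u < 1 \<and> beta_of m u = \<beta>} = {u2}"
      using valley_level_set_one[OF valley, of \<beta>] by auto
    have "mf_solutions \<beta> z = {0, u2}" by (simp only: solutions level)
    then show "\<exists>u2. 0 < u2 \<and> u2 < 1 \<and> mf_solutions \<beta> z = {0, u2}"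
      using u2 c by (intro exI[of _ u2]) simp
  qed
qed

end
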